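(* Let $(X,d,\preccurlyeq)$ be a preordered $s$-regular $b$-metric space and let $T,S,\tilde T,\tilde S:X\to X$. Suppose there are mappings $H_t,K_t:X\to X$, $0\le t\le n$, such that $$T=H_0\preccurlyeq H_1\succcurlyeq H_2\preccurlyeq\cdots\succcurlyeq H_n=\tilde T,\qquad S=K_0\succcurlyeq K_1\preccurlyeq K_2\succcurlyeq\cdots\preccurlyeq K_n=\tilde S.$$ Suppose $x_0\in\mathrm{Coin}(T,S)$ and: (i) for each odd $t$, $1\le t\le n$: $K_t$ is isotone, $H_t$ covers $K_t$, and every chain $C\in\mathcal{C}(x_0,K_t,H_t,\preccurlyeq)$ has a lower bound $w\in X$ satisfying $w\preccurlyeq K_t(w)$ for which there exists $z\in X$ with $H_t^i(z)\preccurlyeq H_t(w)\preccurlyeq K_t(w)$ for all $i\in\mathbb{N}$ and $d(K_t^i(w),H_t^i(z))\to 0$ as $i\to\infty$; (ii) for each even $t$, $1\le t\le n$: $H_t$ is isotone, $K_t$ covers $H_t$, and every chain $C'\in\mathcal{C}(x_0,H_t,K_t,\preccurlyeq)$ has a lower bound $w'\in X$ satisfying $w'\preccurlyeq H_t(w')$ for which there exists $z'\in X$ with $K_t^i(z')\preccurlyeq K_t(w')\preccurlyeq H_t(w')$ for all $i\in\mathbb{N}$ and $d(H_t^i(w'),K_t^i(z'))\to 0$ as $i\to\infty$. Then there exists a chain $x_0\succcurlyeq x_1\succcurlyeq x_2\succcurlyeq\cdots\succcurlyeq x_n$ such that for every $t$, $1\le t\le n$, $x_t\in\mathrm{Coin}(H_t,K_t)\cap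 O_X(x_{t-1})$ and $x_t$ is a minimal element of $\mathrm{Coin}(H_t,K_t)\cap O_X(x_{t-1})$.
   Context: A $b$-metric space with coefficient $s\ge 1$ is a nonempty set $X$ with $d:X\times X\to[0,\infty)$ such that for all $x,y,z$: $d(x,y)=0$ iff $x=y$; $d(x,y)=d(y,x)$; $d(x,y)\le s[d(x,z)+d(z,y)]$. A preorder is a reflexive transitive relation $\preccurlyeq$; $x\succcurlyeq y$ means $y\preccurlyeq x$; $x\prec y$ means $x\preccurlyeq y$ and $x\neq y$. A preordered $s$-regular $b$-metric space $(X,d,\preccurlyeq)$ is a $b$-metric space with coefficient $s$ with a preorder such that $x\preccurlyeq y\preccurlyeq z$ implies $\max\{d(x,y),d(y,z)\}\le s^2d(x,z)$. For maps $F,G:X\to X$, $F\preccurlyeq G$ means $F(x)\preccurlyeq G(x)$ for all $x\in X$. A chain is a subset any two elements of which are comparable. A map $T$ is isotone if $x\preccurlyeq y$ implies $T(x)\preccurlyeq T(y)$; $T^i$ is the $i$-th iterate. $O_X(x_0)=\{x: x\preccurlyeq x_0\}$; $\mathrm{Coin}(T,S)=\{x: T(x)=S(x)\}$. A map $S$ covers a map $T$ if for every $x\in X$ with $T(x)\preccurlyeq S(x)$ there exists $y\preccurlyeq x$ with $S(y)=T(x)$. For maps $T,S$ (here the first argument is the map playing the role of $T$), $\mathcal{C}(T,S,\preccurlyeq)$ is the set of chains $C$ such that for all $x,y\in C$: $T(x)\preccurlyeq S(x)$; $x\prec y$ implies $S(x)\preccurlyeq T(y)$; and $S(C)\subset T(X)$;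 and $\mathcal{C}(x_0,T,S,\preccurlyeq)=\{C\in\mathcal{C}(T,S,\preccurlyeq): C\subset O_X(x_0),\ S(C)\subset T(O_X(x_0))\}$. A lower bound of $C$ is $w$ with $w\preccurlyeq x$ for all $x\in C$. A minimal element of $A$ is $w\in A$ with no $u\in A$ such that $u\prec w$. *)

theory Defs
  imports "HOL-Analysis.Analysis"
begin

text \<open>The space X is the whole (nonempty) type 'a; the preorder is a relation le.\<close>

definition b_metric :: "('a \<Rightarrow> 'a \<Rightarrow> real) \<Rightarrow> real \<Rightarrow> bool" where
  "b_metric d s \<longleftrightarrow> s \<ge> 1 \<and> (\<forall>x y. d x y \<ge> 0) \<and> (\<forall>x y. d x y = 0 \<longleftrightarrow> x = y)
     \<and> (\<forall>x y. d x y = d y x) \<and> (\<forall>x y z. d x y \<le> s * (d x z + d z y))"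

definition preorder_rel :: "('a \<Rightarrow> 'a \<Rightarrow> bool) \<Rightarrow> bool" where
  "preorder_rel le \<longleftrightarrow> (\<forall>x. le x x) \<and> (\<forall>x y z. le x y \<longrightarrow> le y z \<longrightarrow> le x z)"

definition preordered_s_regular_bmetric ::
  "('a \<Rightarrow> 'a \<Rightarrow> real) \<Rightarrow> real \<Rightarrow> ('a \<Rightarrow> 'a \<Rightarrow> bool) \<Rightarrow> bool" where
  "preordered_s_regular_bmetric d s le \<longleftrightarrow> b_metric d s \<and> preorder_rel le \<and>
     (\<forall>x y z. le x y \<longrightarrow> le y z \<longrightarrow> max (d x y) (d y z) \<le> s\<^sup>2 * d x z)"

definition strict_rel :: "('a \<Rightarrow> 'a \<Rightarrow> bool) \<Rightarrow> 'a \<Rightarrow> 'a \<Rightarrow> bool" where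
  "strict_rel le x y \<longleftrightarrow> le x y \<and> x \<noteq> y"

definition map_le :: "('a \<Rightarrow> 'a \<Rightarrow> bool) \<Rightarrow> ('a \<Rightarrow> 'a) \<Rightarrow> ('a \<Rightarrow> 'a) \<Rightarrow> bool" where
  "map_le le F G \<longleftrightarrow> (\<forall>x. le (F x) (G x))"

definition is_chain :: "('a \<Rightarrow> 'a \<Rightarrow> bool) \<Rightarrow> 'a set \<Rightarrow> bool" where
  "is_chain le C \<longleftrightarrow> (\<forall>x\<in>C. \<forall>y\<in>C. le x y \<or> le y x)"

definition isotone :: "('a \<Rightarrow> 'a \<Rightarrow> bool) \<Rightarrow> ('a \<Rightarrow> 'a) \<Rightarrow> bool" where
  "isotone le T \<longleftrightarrow> (\<forall>x y. le x y \<longrightarrow> le (T x) (T y))"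

definition lower_cone :: "('a \<Rightarrow> 'a \<Rightarrow> bool) \<Rightarrow> 'a \<Rightarrow> 'a set" where
  "lower_cone le x0 = {x. le x x0}"

definition Coin :: "('a \<Rightarrow> 'a) \<Rightarrow> ('a \<Rightarrow> 'a) \<Rightarrow> 'a set" where
  "Coin T S = {x. T x = S x}"

definition covers :: "('a \<Rightarrow> 'a \<Rightarrow> bool) \<Rightarrow> ('a \<Rightarrow> 'a) \<Rightarrow> ('a \<Rightarrow> 'a) \<Rightarrow> bool" where
  "covers le S T \<longleftrightarrow> (\<forall>x. le (T x) (S x) \<longrightarrow> (\<exists>y. le y x \<and> S y = T x))"

definition chains_C :: "('a \<Rightarrow> 'a \<Rightarrow> bool) \<Rightarrow> ('a \<Rightarrow> 'a) \<Rightarrow> ('a \<Rightarrow> 'a) \<Rightarrow> 'a set set" where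
  "chains_C le T S = {C. is_chain le C \<and> (\<forall>x\<in>C. le (T x) (S x))
      \<and> (\<forall>x\<in>C. \<forall>y\<in>C. strict_rel le x y \<longrightarrow> le (S x) (T y)) \<and> S ` C \<subseteq> range T}"

definition chains_C0 :: "('a \<Rightarrow> 'a \<Rightarrow> bool) \<Rightarrow> 'a \<Rightarrow> ('a \<Rightarrow> 'a) \<Rightarrow> ('a \<Rightarrow> 'a) \<Rightarrow> 'a set set" where
  "chains_C0 le x0 T S = {C \<in> chains_C le T S. C \<subseteq> lower_cone le x0 \<and> S ` C \<subseteq> T ` lower_cone le x0}"

definition lower_bound :: "('a \<Rightarrow> 'a \<Rightarrow> bool) \<Rightarrow> 'a set \<Rightarrow> 'a \<Rightarrow> bool" where
  "lower_bound le C w \<longleftrightarrow> (\<forall>x\<in>C. le w x)"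

definition minimal_elem :: "('a \<Rightarrow> 'a \<Rightarrow> bool) \<Rightarrow> 'a set \<Rightarrow> 'a \<Rightarrow> bool" where
  "minimal_elem le A w \<longleftrightarrow> w \<in> A \<and> \<not> (\<exists>u\<in>A. strict_rel le u w)"

end

theory Submission
  imports Defs
begin

text \<open>An \<open>s\<close>-regular preorder is antisymmetric, since \<open>x \<preccurlyeq> y \<preccurlyeq> x\<close> forces
  \<open>d x y \<le> s\<^sup>2 d x x = 0\<close>. Regularity also squeezes distances along a chain: from
  \<open>Q\<^sup>i z \<preccurlyeq> Q w \<preccurlyeq> P w \<preccurlyeq> P\<^sup>i w\<close> we get \<open>d (Q w) (P w) \<le> s\<^sup>4 d (P\<^sup>i w) (Q\<^sup>i z) \<longrightarrow> 0\<close>,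
  so the lower bounds granted by the hypotheses are coincidence points. A chain of coincidence
  points of \<open>(P, Q)\<close> below \<open>x \<preccurlyeq> x\<^sub>0\<close> automatically satisfies the chain conditions when \<open>P\<close> is
  isotone, so it has a lower bound among them; the covering property makes the set nonempty, and
  Zorn's lemma yields a minimal coincidence point below \<open>x\<close>. The zigzag inequalities turn a
  coincidence point of \<open>(H\<^sub>t, K\<^sub>t)\<close> into a point where \<open>H\<^sub>t\<^sub>+\<^sub>1\<close> and \<open>K\<^sub>t\<^sub>+\<^sub>1\<close> are ordered, so
  \<open>x\<^sub>1, \<dots>, x\<^sub>n\<close> are chosen one after the other.\<close>

lemma preorder_relD:
  assumes "preorder_rel le"
  shows preorder_rel_refl: "le x x"
    and preorder_rel_trans: "le x y \<Longrightarrow> le y z \<Longrightarrow> le x z"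
  using assms unfolding preorder_rel_def by blast+

lemma preordered_s_regular_bmetricD:
  assumes "preordered_s_regular_bmetric d s le"
  shows preordered_s_regular_bmetric_preorder: "preorder_rel le"
    and preordered_s_regular_bmetric_b_metric: "b_metric d s"
    and s_regular_left: "le x y \<Longrightarrow> le y z \<Longrightarrow> d x y \<le> s\<^sup>2 * d x z"
    and s_regular_right: "le x y \<Longrightarrow> le y z \<Longrightarrow> d y z \<le> s\<^sup>2 * d x z"
  using assms unfolding preordered_s_regular_bmetric_def by auto

lemma b_metricD:
  assumes "b_metric d s"
  shows b_metric_nonneg: "0 \<le> d x y"
    and b_metric_eq_0_iff: "d x y = 0 \<longleftrightarrow> x = y"
    and b_metric_commute: "d x y = d y x"
  using assms unfolding b_metric_def by blast+

lemma b_metric_le_0_imp_eq: "b_metric d s \<Longrightarrow> d x y \<le> 0 \<Longrightarrow> x = y"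
  using b_metric_nonneg b_metric_eq_0_iff by (metis order_antisym)

lemma s_regular_antisym:
  assumes sp: "preordered_s_regular_bmetric d s le" and "le x y" "le y x"
  shows "x = y"
proof -
  have bm: "b_metric d s"
    using sp by (rule preordered_s_regular_bmetric_b_metric)
  have "d x y \<le> s\<^sup>2 * d x x"
    using s_regular_left[OF sp assms(2,3)] .
  also have "\<dots> = 0"
    using b_metric_eq_0_iff[OF bm] by simp
  finally show "x = y"
    by (rule b_metric_le_0_imp_eq[OF bm])
qed

lemma Coin_commute: "Coin P Q = Coin Q P"
  unfolding Coin_def by auto

lemma isotoneD: "isotone le P \<Longrightarrow> le x y \<Longrightarrow> le (P x) (P y)"
  unfolding isotone_def by blast

lemma isotone_iterate_ge:
  assumes pre: "preorder_rel le" and iso: "isotone le P" and w: "le w (P w)" and "i \<ge> 1"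
  shows "le (P w) ((P ^^ i) w)"
proof -
  have below: "le w ((P ^^ j) w)" for j
  proof (induction j)
    case 0
    show ?case using pre by (simp add: preorder_rel_refl)
  next
    case (Suc j)
    then have "le (P w) ((P ^^ Suc j) w)"
      using isotoneD[OF iso] by simp
    with w show ?case using pre by (blast intro: preorder_rel_trans)
  qed
  obtain j where "i = Suc j" using \<open>i \<ge> 1\<close> by (cases i) auto
  then show ?thesis using isotoneD[OF iso below[of j]] by simp
qed

lemma s_regular_coincidence_of_iterates:
  assumes sp: "preordered_s_regular_bmetric d s le" and iso: "isotone le P"
    and w: "le w (P w)" and QP: "le (Q w) (P w)"
    and z: "\<And>i. i \<ge> 1 \<Longrightarrow> le ((Q ^^ i) z) (Q w)"
    and lim: "(\<lambda>i. d ((P ^^ i) w) ((Q ^^ i) z)) \<longlonglongrightarrow> 0"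
  shows "Q w = P w"
proof -
  have pre: "preorder_rel le" and bm: "b_metric d s"
    using sp by (rule preordered_s_regular_bmetricD)+
  have bound: "d (Q w) (P w) \<le> s^4 * d ((P ^^ i) w) ((Q ^^ i) z)" if "i \<ge> 1" for i
  proof -
    have Pi: "le (P w) ((P ^^ i) w)"
      using isotone_iterate_ge[OF pre iso w that] .
    have Qi: "le (Q w) ((P ^^ i) w)"
      using pre QP Pi by (rule preorder_rel_trans)
    have "d (Q w) (P w) \<le> s\<^sup>2 * d (Q w) ((P ^^ i) w)"
      using s_regular_left[OF sp QP Pi] .
    also have "\<dots> \<le> s\<^sup>2 * (s\<^sup>2 * d ((Q ^^ i) z) ((P ^^ i) w))"
      using s_regular_right[OF sp z[OF that] Qi] by (rule mult_left_mono) simp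
    finally show ?thesis
      using b_metric_commute[OF bm] by (simp add: power4_eq_xxxx power2_eq_square mult.assoc)
  qed
  have "(\<lambda>i. s^4 * d ((P ^^ i) w) ((Q ^^ i) z)) \<longlonglongrightarrow> 0"
    using tendsto_mult_right_zero[OF lim] .
  then have "d (Q w) (P w) \<le> 0"
    using bound by (intro LIMSEQ_le_const) auto
  then show ?thesis
    by (rule b_metric_le_0_imp_eq[OF bm])
qed

text \<open>Hypothesis (i) resp. (ii) of the theorem, with \<open>(P, Q) = (K\<^sub>t, H\<^sub>t)\<close> resp. \<open>(H\<^sub>t, K\<^sub>t)\<close>.\<close>

definition chains_have_iterate_lower_bounds ::
  "('a \<Rightarrow> 'a \<Rightarrow> real) \<Rightarrow> ('a \<Rightarrow> 'a \<Rightarrow> bool) \<Rightarrow> 'a \<Rightarrow> ('a \<Rightarrow> 'a) \<Rightarrow> ('a \<Rightarrow> 'a) \<Rightarrow> bool" where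
  "chains_have_iterate_lower_bounds d le x0 P Q \<longleftrightarrow>
     (\<forall>C \<in> chains_C0 le x0 P Q. \<exists>w. lower_bound le C w \<and> le w (P w) \<and>
        (\<exists>z. (\<forall>i\<ge>1. le ((Q ^^ i) z) (Q w) \<and> le (Q w) (P w)) \<and>
             (\<lambda>i. d ((P ^^ i) w) ((Q ^^ i) z)) \<longlonglongrightarrow> 0))"

lemma chains_C0_coincidence_lower_bound:
  assumes sp: "preordered_s_regular_bmetric d s le" and iso: "isotone le P"
    and bounds: "chains_have_iterate_lower_bounds d le x0 P Q"
    and C: "C \<in> chains_C0 le x0 P Q"
  shows "\<exists>w \<in> Coin P Q. lower_bound le C w"
proof -
  obtain w z where lb: "lower_bound le C w" and w: "le w (P w)"
    and squeeze: "\<forall>i\<ge>1. le ((Q ^^ i) z) (Q w) \<and> le (Q w) (P w)"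
    and lim: "(\<lambda>i. d ((P ^^ i) w) ((Q ^^ i) z)) \<longlonglongrightarrow> 0"
    using bounds C unfolding chains_have_iterate_lower_bounds_def by blast
  have "le (Q w) (P w)"
    using squeeze by auto
  then have "Q w = P w"
    by (rule s_regular_coincidence_of_iterates[OF sp iso w _ _ lim]) (use squeeze in auto)
  then have "w \<in> Coin P Q"
    unfolding Coin_def by simp
  with lb show ?thesis by blast
qed

lemma chain_of_coincidences_in_chains_C0:
  assumes pre: "preorder_rel le" and iso: "isotone le P" and x: "le x x0"
    and C: "is_chain le C" "C \<subseteq> Coin P Q \<inter> lower_cone le x"
  shows "C \<in> chains_C0 le x0 P Q"
proof -
  have coin: "Q c = P c" if "c \<in> C" for c
    using C(2) that unfolding Coin_def by auto
  have below: "C \<subseteq> lower_cone le x0"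
    using C(2) pre x unfolding lower_cone_def by (auto intro: preorder_rel_trans)
  have "le (P c) (Q c)" if "c \<in> C" for c
    using coin[OF that] pre by (simp add: preorder_rel_refl)
  moreover have "le (Q a) (P b)" if "a \<in> C" "le a b" for a b
    using coin[OF that(1)] iso that(2) unfolding isotone_def by simp
  moreover have "Q ` C \<subseteq> P ` lower_cone le x0"
  proof -
    have "Q ` C = P ` C"
      using coin by (simp cong: image_cong)
    then show ?thesis
      using below by (simp add: image_mono)
  qed
  ultimately show ?thesis
    using C(1) below unfolding chains_C0_def chains_C_def strict_rel_def by blast
qed

lemma exists_minimal_elem:
  assumes pre: "preorder_rel le" and antisym: "\<And>x y. le x y \<Longrightarrow> le y x \<Longrightarrow> x = y"
    and "A \<noteq> {}"
    and bounded: "\<And>C. is_chain le C \<Longrightarrow> C \<subseteq> A \<Longrightarrow> C \<noteq> {} \<Longrightarrow> \<exists>w \<in> A. lower_bound le C w"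
  shows "\<exists>m. minimal_elem le A m"
proof -
  let ?r = "relation_of (\<lambda>a b. le b a) A"
  have "refl_on A ?r"
    using pre unfolding refl_on_def relation_of_def by (auto simp: preorder_rel_refl)
  moreover have "trans ?r"
    using pre unfolding trans_def relation_of_def by (blast intro: preorder_rel_trans)
  moreover have "antisym ?r"
    using antisym unfolding antisym_def relation_of_def by blast
  ultimately have po: "partial_order_on A ?r"
    unfolding partial_order_on_def preorder_on_def relation_of_def by auto
  have chains: "\<exists>u \<in> A. \<forall>a \<in> C. le u a" if "C \<in> Chains ?r" for C
  proof (cases "C = {}")
    case True
    then show ?thesis using \<open>A \<noteq> {}\<close> by blast
  next
    case False
    moreover have "is_chain le C" "C \<subseteq> A"
      using that unfolding Chains_def relation_of_def is_chain_def by auto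
    ultimately show ?thesis using bounded unfolding lower_bound_def by blast
  qed
  obtain m where "m \<in> A" "\<forall>a \<in> A. le a m \<longrightarrow> a = m"
    using predicate_Zorn[OF po chains] by blast
  then show ?thesis unfolding minimal_elem_def strict_rel_def by blast
qed

lemma s_regular_exists_minimal_coincidence:
  assumes sp: "preordered_s_regular_bmetric d s le" and iso: "isotone le P"
    and cov: "covers le Q P" and bounds: "chains_have_iterate_lower_bounds d le x0 P Q"
    and x: "le x x0" and PQ: "le (P x) (Q x)"
  shows "\<exists>m. minimal_elem le (Coin P Q \<inter> lower_cone le x) m"
proof -
  have pre: "preorder_rel le"
    using sp by (rule preordered_s_regular_bmetric_preorder)
  have bounded: "\<exists>w \<in> Coin P Q \<inter> lower_cone le x. lower_bound le C w"
    if C: "C \<in> chains_C0 le x0 P Q" and c: "c \<in> C" "le c x" for C c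
  proof -
    obtain w where "w \<in> Coin P Q" "lower_bound le C w"
      using chains_C0_coincidence_lower_bound[OF sp iso bounds C] by blast
    moreover from this have "le w x"
      using c pre unfolding lower_bound_def by (blast intro: preorder_rel_trans)
    ultimately show ?thesis unfolding lower_cone_def by blast
  qed
  obtain y where y: "le y x" "Q y = P x"
    using cov PQ unfolding covers_def by blast
  have "le (P y) (Q y)"
    using iso y unfolding isotone_def by simp
  then have "{y} \<in> chains_C0 le x0 P Q"
    using y x pre unfolding chains_C0_def chains_C_def is_chain_def strict_rel_def lower_cone_def
    by (auto intro: preorder_rel_refl preorder_rel_trans)
  then have nonempty: "Coin P Q \<inter> lower_cone le x \<noteq> {}"
    using bounded y(1) by blast
  have chains_bounded: "\<exists>w \<in> Coin P Q \<inter> lower_cone le x. lower_bound le C w"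
    if C: "is_chain le C" "C \<subseteq> Coin P Q \<inter> lower_cone le x" "C \<noteq> {}" for C
  proof -
    obtain c where c: "c \<in> C" using C(3) by blast
    then have "le c x" using C(2) unfolding lower_cone_def by blast
    then show ?thesis
      using c bounded[OF chain_of_coincidences_in_chains_C0[OF pre iso x C(1,2)]] by blast
  qed
  show ?thesis
    using exists_minimal_elem[OF pre s_regular_antisym[OF sp] nonempty chains_bounded] .
qed

lemma s_regular_exists_minimal_coincidence_after_zigzag:
  assumes sp: "preordered_s_regular_bmetric d s le"
    and "map_le le F Q" "map_le le P G" and x: "x \<in> Coin F G" "le x x0"
    and iso: "isotone le P" and cov: "covers le Q P"
    and bounds: "chains_have_iterate_lower_bounds d le x0 P Q"
  shows "\<exists>m. minimal_elem le (Coin P Q \<inter> lower_cone le x) m"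
proof -
  have pre: "preorder_rel le"
    using sp by (rule preordered_s_regular_bmetric_preorder)
  have "le (P x) (G x)" "le (F x) (Q x)"
    using assms(2,3) unfolding map_le_def by blast+
  moreover have "G x = F x"
    using x(1) unfolding Coin_def by simp
  ultimately have "le (P x) (Q x)"
    using pre by (metis preorder_rel_trans)
  then show ?thesis
    by (rule s_regular_exists_minimal_coincidence[OF sp iso cov bounds x(2)])
qed

lemma s_regular_zigzag_step:
  assumes sp: "preordered_s_regular_bmetric d s le"
    and Hzig: "\<forall>t<n. (if even t then map_le le (H t) (H (Suc t)) else map_le le (H (Suc t)) (H t))"
    and Kzig: "\<forall>t<n. (if even t then map_le le (K (Suc t)) (K t) else map_le le (K t) (K (Suc t)))"
    and odd_step: "odd (Suc t) \<Longrightarrow> isotone le (K (Suc t)) \<and> covers le (H (Suc t)) (K (Suc t)) \<and>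
        chains_have_iterate_lower_bounds d le x0 (K (Suc t)) (H (Suc t))"
    and even_step: "even (Suc t) \<Longrightarrow> isotone le (H (Suc t)) \<and> covers le (K (Suc t)) (H (Suc t)) \<and>
        chains_have_iterate_lower_bounds d le x0 (H (Suc t)) (K (Suc t))"
    and t: "t < n" and x: "x \<in> Coin (H t) (K t)" "le x x0"
  shows "\<exists>m. minimal_elem le (Coin (H (Suc t)) (K (Suc t)) \<inter> lower_cone le x) m"
proof (cases "even t")
  case True
  have "map_le le (H t) (H (Suc t))" "map_le le (K (Suc t)) (K t)"
    using Hzig[rule_format, OF t] Kzig[rule_format, OF t] True by simp_all
  moreover have "isotone le (K (Suc t))" "covers le (H (Suc t)) (K (Suc t))"
    "chains_have_iterate_lower_bounds d le x0 (K (Suc t)) (H (Suc t))"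
    using odd_step True by simp_all
  ultimately have "\<exists>m. minimal_elem le (Coin (K (Suc t)) (H (Suc t)) \<inter> lower_cone le x) m"
    by (rule s_regular_exists_minimal_coincidence_after_zigzag[OF sp _ _ x])
  then show ?thesis by (simp only: Coin_commute[of "K (Suc t)"])
next
  case False
  have "map_le le (K t) (K (Suc t))" "map_le le (H (Suc t)) (H t)"
    using Hzig[rule_format, OF t] Kzig[rule_format, OF t] False by simp_all
  moreover have "x \<in> Coin (K t) (H t)"
    using x(1) by (simp only: Coin_commute[of "K t"])
  moreover have "isotone le (H (Suc t))" "covers le (K (Suc t)) (H (Suc t))"
    "chains_have_iterate_lower_bounds d le x0 (H (Suc t)) (K (Suc t))"
    using even_step False by simp_all
  ultimately show ?thesis
    by (rule s_regular_exists_minimal_coincidence_after_zigzag[OF sp _ _ _ x(2)])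
qed

lemma exists_chain_of_minimal_elems:
  assumes pre: "preorder_rel le" and "x0 \<in> A 0"
    and step: "\<And>t x. t < n \<Longrightarrow> x \<in> A t \<Longrightarrow> le x x0 \<Longrightarrow>
                 \<exists>m. minimal_elem le (A (Suc t) \<inter> lower_cone le x) m"
  shows "\<exists>x. x 0 = x0 \<and>
           (\<forall>t. 1 \<le> t \<and> t \<le> n \<longrightarrow> minimal_elem le (A t \<inter> lower_cone le (x (t - 1))) (x t))"
proof -
  define x where
    "x = rec_nat x0 (\<lambda>t xt. SOME m. minimal_elem le (A (Suc t) \<inter> lower_cone le xt) m)"
  have x_Suc: "x (Suc t) = (SOME m. minimal_elem le (A (Suc t) \<inter> lower_cone le (x t)) m)" for t
    unfolding x_def by simp
  have invariant: "x t \<in> A t \<and> le (x t) x0 \<and>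
      (t \<ge> 1 \<longrightarrow> minimal_elem le (A t \<inter> lower_cone le (x (t - 1))) (x t))" if "t \<le> n" for t
    using that
  proof (induction t)
    case 0
    show ?case using \<open>x0 \<in> A 0\<close> pre by (simp add: x_def preorder_rel_refl)
  next
    case (Suc t)
    then have "t < n" "x t \<in> A t" and below_x0: "le (x t) x0" by auto
    then have "\<exists>m. minimal_elem le (A (Suc t) \<inter> lower_cone le (x t)) m"
      by (rule step)
    then have min: "minimal_elem le (A (Suc t) \<inter> lower_cone le (x t)) (x (Suc t))"
      unfolding x_Suc by (rule someI_ex)
    then have "x (Suc t) \<in> A (Suc t)" "le (x (Suc t)) (x t)"
      unfolding minimal_elem_def lower_cone_def by auto
    moreover have "le (x (Suc t)) x0"
      using pre \<open>le (x (Suc t)) (x t)\<close> below_x0 by (rule preorder_rel_trans)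
    ultimately show ?case using min by simp
  qed
  show ?thesis
  proof (intro exI[of _ x] conjI allI impI)
    show "x 0 = x0" by (simp add: x_def)
  next
    fix t assume "1 \<le> t \<and> t \<le> n"
    then show "minimal_elem le (A t \<inter> lower_cone le (x (t - 1))) (x t)"
      using invariant by blast
  qed
qed

theorem theorem2p3:
  fixes d :: "'a \<Rightarrow> 'a \<Rightarrow> real" and s :: real and le :: "'a \<Rightarrow> 'a \<Rightarrow> bool"
    and T S T' S' :: "'a \<Rightarrow> 'a" and H K :: "nat \<Rightarrow> 'a \<Rightarrow> 'a" and n :: nat and x0 :: 'a
  assumes sp: "preordered_s_regular_bmetric d s le"
    and H0: "H 0 = T" and Hn: "H n = T'" and K0: "K 0 = S" and Kn: "K n = S'"
    and Hzig: "\<forall>t<n. (if even t then map_le le (H t) (H (Suc t)) else map_le le (H (Suc t)) (H t))"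
    and Kzig: "\<forall>t<n. (if even t then map_le le (K (Suc t)) (K t) else map_le le (K t) (K (Suc t)))"
    and x0: "x0 \<in> Coin T S"
    and odd_case: "\<forall>t. 1 \<le> t \<and> t \<le> n \<and> odd t \<longrightarrow>
        isotone le (K t) \<and> covers le (H t) (K t) \<and>
        (\<forall>C \<in> chains_C0 le x0 (K t) (H t). \<exists>w. lower_bound le C w \<and> le w (K t w) \<and>
           (\<exists>z. (\<forall>i\<ge>1. le ((H t ^^ i) z) (H t w) \<and> le (H t w) (K t w)) \<and>
                (\<lambda>i. d ((K t ^^ i) w) ((H t ^^ i) z)) \<longlonglongrightarrow> 0))"
    and even_case: "\<forall>t. 1 \<le> t \<and> t \<le> n \<and> even t \<longrightarrow>
        isotone le (H t) \<and> covers le (K t) (H t) \<and>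
        (\<forall>C \<in> chains_C0 le x0 (H t) (K t). \<exists>w. lower_bound le C w \<and> le w (H t w) \<and>
           (\<exists>z. (\<forall>i\<ge>1. le ((K t ^^ i) z) (K t w) \<and> le (K t w) (H t w)) \<and>
                (\<lambda>i. d ((H t ^^ i) w) ((K t ^^ i) z)) \<longlonglongrightarrow> 0))"
  shows "\<exists>x :: nat \<Rightarrow> 'a. x 0 = x0 \<and>
     (\<forall>t. 1 \<le> t \<and> t \<le> n \<longrightarrow>
        le (x t) (x (t - 1)) \<and>
        x t \<in> Coin (H t) (K t) \<inter> lower_cone le (x (t - 1)) \<and>
        minimal_elem le (Coin (H t) (K t) \<inter> lower_cone le (x (t - 1))) (x t))"
proof -
  have pre: "preorder_rel le"
    using sp by (rule preordered_s_regular_bmetric_preorder)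
  have step: "\<exists>m. minimal_elem le (Coin (H (Suc t)) (K (Suc t)) \<inter> lower_cone le x) m"
    if "t < n" "x \<in> Coin (H t) (K t)" "le x x0" for t x
    by (rule s_regular_zigzag_step[OF sp Hzig Kzig _ _ that])
      (use odd_case[rule_format, of "Suc t"] even_case[rule_format, of "Suc t"] that(1)
        in \<open>simp_all add: chains_have_iterate_lower_bounds_def\<close>)
  have start: "x0 \<in> Coin (H 0) (K 0)"
    using x0 H0 K0 by simp
  obtain x where "x 0 = x0" and minimal:
    "\<And>t. 1 \<le> t \<and> t \<le> n \<Longrightarrow> minimal_elem le (Coin (H t) (K t) \<inter> lower_cone le (x (t - 1))) (x t)"
    using exists_chain_of_minimal_elems[where A = "\<lambda>t. Coin (H t) (K t)", OF pre start step] by blast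
  show ?thesis
  proof (intro exI[of _ x] conjI allI impI)
    fix t assume "1 \<le> t \<and> t \<le> n"
    then show "minimal_elem le (Coin (H t) (K t) \<inter> lower_cone le (x (t - 1))) (x t)"
      by (rule minimal)
    then show "x t \<in> Coin (H t) (K t) \<inter> lower_cone le (x (t - 1))"
      unfolding minimal_elem_def by blast
    then show "le (x t) (x (t - 1))"
      unfolding lower_cone_def by blast
  qed fact
qed

end
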